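(* Let $\delta$ satisfy the Kalmanson conditions with respect to $\pi=(x_1,\dots,x_n)$, let $C_1,\dots,C_m$ be a partition of $X$ into consecutive intervals of $\pi$ in this order, and let $\mu$ be a block weighting. If $1\le i<j\le m$ with $i<j-3$, then there exists $k\in\{1,\dots,m\}$ (indices read cyclically, $C_{m+1}=C_1$) such that \[Q_\delta(C_i,C_j)-Q_\delta(C_k,C_{k+1})\ge0.\]
   Context: $X=\{1,\dots,n\}$. A dissimilarity map is $\delta:X\times X\to\mathbb{R}$ with $\delta(i,j)=\delta(j,i)\ge0$, $\delta(i,i)=0$. A circular ordering is a listing $\pi=(x_1,\dots,x_n)$ of $X$ regarded cyclically. $\delta$ satisfies the Kalmanson conditions with respect to $\pi$ if for all $1\le i<j<k<l\le n$: $\delta(x_i,x_j)+\delta(x_k,x_l)\le\delta(x_i,x_k)+\delta(x_j,x_l)$ and $\delta(x_i,x_l)+\delta(x_j,x_k)\le\delta(x_i,x_k)+\delta(x_j,x_l)$. The partition into consecutive intervals means $C_1=\{x_1,\dots,x_{a_1}\}$, $C_2=\{x_{a_1+1},\dots,x_{a_2}\},\dots,C_m=\{x_{a_{m-1}+1},\dots,x_n\}$. A block weighting is $\mu:X\to\mathbb{R}_{\ge0}$ with $\sum_{x\in C_r}\mu(x)=1$ for every $r$. Set $\delta(C_r,C_s)=\sum_{x\in C_r,y\in C_s}\mu(x)\mu(y)\delta(x,y)$ and $Q_\delta(C_r,C_s)=(m-2)\delta(C_r,C_s)-\sum_{t\ne r}\delta(C_r,C_t)-\sum_{t\ne s}\delta(C_s,C_t)$.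 *)

theory Defs
  imports Complex_Main
begin

text \<open>Ground set X = {1..n}. A dissimilarity map on X.\<close>
definition dissimilarity :: "nat \<Rightarrow> (nat \<Rightarrow> nat \<Rightarrow> real) \<Rightarrow> bool" where
  "dissimilarity n \<delta> \<longleftrightarrow>
     (\<forall>x\<in>{1..n}. \<forall>y\<in>{1..n}. \<delta> x y = \<delta> y x \<and> \<delta> x y \<ge> 0) \<and>
     (\<forall>x\<in>{1..n}. \<delta> x x = 0)"

text \<open>A circular ordering (x_1,...,x_n) of X is given by a bijection \<pi> of {1..n},
  with x_i = \<pi> i.\<close>
definition circular_ordering :: "nat \<Rightarrow> (nat \<Rightarrow> nat) \<Rightarrow> bool" where
  "circular_ordering n \<pi> \<longleftrightarrow> bij_betw \<pi> {1..n} {1..n}"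

definition kalmanson :: "nat \<Rightarrow> (nat \<Rightarrow> nat \<Rightarrow> real) \<Rightarrow> (nat \<Rightarrow> nat) \<Rightarrow> bool" where
  "kalmanson n \<delta> \<pi> \<longleftrightarrow>
     (\<forall>i j k l. 1 \<le> i \<and> i < j \<and> j < k \<and> k < l \<and> l \<le> n \<longrightarrow>
        \<delta> (\<pi> i) (\<pi> j) + \<delta> (\<pi> k) (\<pi> l) \<le> \<delta> (\<pi> i) (\<pi> k) + \<delta> (\<pi> j) (\<pi> l) \<and>
        \<delta> (\<pi> i) (\<pi> l) + \<delta> (\<pi> j) (\<pi> k) \<le> \<delta> (\<pi> i) (\<pi> k) + \<delta> (\<pi> j) (\<pi> l))"

text \<open>Partition of X into m consecutive nonempty intervals of \<pi>, given by breakpoints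
  0 = a 0 < a 1 < ... < a m = n; block r is C_r = {x_t | a (r-1) < t \<le> a r}.\<close>
definition interval_partition :: "nat \<Rightarrow> nat \<Rightarrow> (nat \<Rightarrow> nat) \<Rightarrow> bool" where
  "interval_partition n m a \<longleftrightarrow> 1 \<le> m \<and> a 0 = 0 \<and> a m = n \<and> (\<forall>r<m. a r < a (Suc r))"

definition block :: "(nat \<Rightarrow> nat) \<Rightarrow> (nat \<Rightarrow> nat) \<Rightarrow> nat \<Rightarrow> nat set" where
  "block \<pi> a r = \<pi> ` {a (r - 1)<..a r}"

definition block_weighting :: "nat \<Rightarrow> nat \<Rightarrow> (nat \<Rightarrow> nat) \<Rightarrow> (nat \<Rightarrow> nat) \<Rightarrow> (nat \<Rightarrow> real) \<Rightarrow> bool" where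
  "block_weighting n m \<pi> a \<mu> \<longleftrightarrow>
     (\<forall>x\<in>{1..n}. \<mu> x \<ge> 0) \<and> (\<forall>r\<in>{1..m}. (\<Sum>x\<in>block \<pi> a r. \<mu> x) = 1)"

definition block_dist ::
  "(nat \<Rightarrow> nat \<Rightarrow> real) \<Rightarrow> (nat \<Rightarrow> real) \<Rightarrow> (nat \<Rightarrow> nat) \<Rightarrow> (nat \<Rightarrow> nat) \<Rightarrow> nat \<Rightarrow> nat \<Rightarrow> real" where
  "block_dist \<delta> \<mu> \<pi> a r s = (\<Sum>x\<in>block \<pi> a r. \<Sum>y\<in>block \<pi> a s. \<mu> x * \<mu> y * \<delta> x y)"

definition Qd ::
  "(nat \<Rightarrow> nat \<Rightarrow> real) \<Rightarrow> (nat \<Rightarrow> real) \<Rightarrow> (nat \<Rightarrow> nat) \<Rightarrow> (nat \<Rightarrow> nat) \<Rightarrow> nat \<Rightarrow> nat \<Rightarrow> nat \<Rightarrow> real" where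
  "Qd \<delta> \<mu> \<pi> a m r s =
     (real m - 2) * block_dist \<delta> \<mu> \<pi> a r s
     - (\<Sum>t\<in>{1..m} - {r}. block_dist \<delta> \<mu> \<pi> a r t)
     - (\<Sum>t\<in>{1..m} - {s}. block_dist \<delta> \<mu> \<pi> a s t)"

definition cyc_succ :: "nat \<Rightarrow> nat \<Rightarrow> nat" where
  "cyc_succ m k = (if k = m then 1 else k + 1)"

end

theory Submission
  imports Defs
begin

(* Averaging \<delta> over the blocks with the weights \<mu> turns its Kalmanson inequalities into
   Kalmanson inequalities for the m \<times> m block matrix D, and Qd becomes
   Q(x, y) = (m - 2) D x y - R x - R y with row sums R.  The Kalmanson conditions are invariant
   under rotating the circular order, so we may assume that the chord (i, j) spans an arc of
   length L = j - i \<le> m / 2.  Then the sum of Q(i, j) - Q(k, k + 1) over k = i, ..., j - 1 is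
   nonnegative: the contribution of the points outside [i, j] is bounded using the Kalmanson
   inequalities, and what remains is 2 (W - (L - 1) S) + (m - 2 L) (A + B - S - (L - 2) D i j),
   where S is the length of the path i, i + 1, ..., j, A + B the total distance of the interior
   points to i and j, and W their total distance to all of [i, j].  Both brackets are
   nonnegative by the Kalmanson inequalities inside [i, j], so some summand is nonnegative. *)

definition row_sum :: "nat \<Rightarrow> (nat \<Rightarrow> nat \<Rightarrow> real) \<Rightarrow> nat \<Rightarrow> real" where
  "row_sum m D x = (\<Sum>t\<in>{1..m}. D x t)"

definition Q_matrix :: "nat \<Rightarrow> (nat \<Rightarrow> nat \<Rightarrow> real) \<Rightarrow> nat \<Rightarrow> nat \<Rightarrow> real" where
  "Q_matrix m D x y = (real m - 2) * D x y - row_sum m D x - row_sum m D y"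

lemma sum_Q_diff_adjacent:
  assumes "i < j"
  shows "(\<Sum>k\<in>{i..<j}. Q_matrix m D i j - Q_matrix m D k (Suc k)) =
    (real m - 2) * (real (j - i) * D i j - (\<Sum>k\<in>{i..<j}. D k (Suc k)))
    + (\<Sum>t\<in>{Suc i..<j}. 2 * row_sum m D t - row_sum m D i - row_sum m D j)"
proof -
  let ?R = "row_sum m D"
  have "(\<Sum>k\<in>{i..<j}. ?R k) = ?R i + (\<Sum>t\<in>{Suc i..<j}. ?R t)"
    using assms by (simp add: sum.atLeast_Suc_lessThan)
  moreover have "(\<Sum>k\<in>{i..<j}. ?R (Suc k)) = (\<Sum>t\<in>{Suc i..<j}. ?R t) + ?R j"
    using assms by (simp add: sum.shift_bounds_Suc_ivl[symmetric] sum.atLeastLessThan_Suc)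
  ultimately show ?thesis
    using assms by (simp add: Q_matrix_def sum_subtractf sum.distrib sum_distrib_left of_nat_diff algebra_simps)
qed

lemma Q_matrix_reindex:
  assumes "bij_betw \<sigma> {1..m} {1..m}"
  shows "Q_matrix m (\<lambda>x y. D (\<sigma> x) (\<sigma> y)) x y = Q_matrix m D (\<sigma> x) (\<sigma> y)"
  using sum.reindex_bij_betw[OF assms, of "D (\<sigma> x)"] sum.reindex_bij_betw[OF assms, of "D (\<sigma> y)"]
  by (simp add: Q_matrix_def row_sum_def)

lemma cyc_succ_funpow:
  assumes "x \<in> {1..m}"
  shows "(cyc_succ m ^^ c) x = (x + c - 1) mod m + 1"
proof (induction c)
  case 0
  have "x - 1 < m" using assms by auto
  then show ?case using assms by simp
next
  case (Suc c)
  define y where "y = x + c - 1"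
  have "x + Suc c - 1 = Suc y" using assms by (auto simp: y_def)
  then show ?case
    using Suc.IH by (simp add: y_def[symmetric] cyc_succ_def mod_Suc)
qed

lemma bij_betw_cyc_succ: "bij_betw (cyc_succ m) {1..m} {1..m}"
proof -
  have "inj_on (cyc_succ m) {1..m}" by (auto simp: inj_on_def cyc_succ_def)
  moreover have "cyc_succ m ` {1..m} \<subseteq> {1..m}" by (auto simp: cyc_succ_def)
  ultimately show ?thesis by (simp add: bij_betw_def endo_inj_surj)
qed

lemma ex_nonneg_if_sum_nonneg:
  fixes f :: "'a \<Rightarrow> real"
  assumes "finite A" "A \<noteq> {}" "0 \<le> sum f A"
  shows "\<exists>k\<in>A. 0 \<le> f k"
proof (rule ccontr)
  assume "\<not> ?thesis"
  then have "sum f A < sum (\<lambda>_. 0) A" using assms by (intro sum_strict_mono) auto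
  then show False using assms by simp
qed

locale kalmanson_matrix =
  fixes m :: nat and D :: "nat \<Rightarrow> nat \<Rightarrow> real"
  assumes sym: "D x y = D y x"
    and diag: "D x x = 0"
    and four_point: "\<lbrakk>1 \<le> p; p < q; q < r; r < s; s \<le> m\<rbrakk> \<Longrightarrow> D p q + D r s \<le> D p r + D q s"
      "\<lbrakk>1 \<le> p; p < q; q < r; r < s; s \<le> m\<rbrakk> \<Longrightarrow> D p s + D q r \<le> D p r + D q s"
begin

lemma Q_sym: "Q_matrix m D x y = Q_matrix m D y x"
  by (simp add: Q_matrix_def sym[of x y])

lemma adjacent_pairs_le_cross:
  assumes "1 \<le> k" "1 \<le> l" "Suc k \<le> m" "Suc l \<le> m" "k \<noteq> l"
  shows "D k (Suc k) + D l (Suc l) \<le> D k l + D (Suc k) (Suc l)"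
proof -
  have *: "D k (Suc k) + D l (Suc l) \<le> D k l + D (Suc k) (Suc l)"
    if "1 \<le> k" "k < l" "Suc l \<le> m" for k l
  proof (cases "l = Suc k")
    case True
    then show ?thesis by (simp add: diag)
  next
    case False
    then show ?thesis using four_point(1)[of k "Suc k" l "Suc l"] that by simp
  qed
  show ?thesis
  proof (cases "k < l")
    case True
    then show ?thesis using *[of k l] assms by simp
  next
    case False
    then show ?thesis using *[of l k] assms by (simp add: sym)
  qed
qed

lemma interval_square_sums:
  assumes "i < j"
  shows "(\<Sum>k\<in>{i..<j}. \<Sum>l\<in>{i..<j}. D k l) + (\<Sum>k\<in>{Suc i..<Suc j}. \<Sum>l\<in>{Suc i..<Suc j}. D k l)
       = 2 * (\<Sum>t\<in>{Suc i..<j}. \<Sum>y\<in>{i..j}. D t y)"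
proof -
  define T where "T = {Suc i..<j}"
  have fin: "finite T" and notin: "i \<notin> T" "j \<notin> T" "i \<noteq> j" using assms by (auto simp: T_def)
  have row: "(\<Sum>t\<in>T. D t x) = (\<Sum>t\<in>T. D x t)" for x by (simp add: sym)
  have "{i..<j} = insert i T" "{Suc i..<Suc j} = insert j T" "{i..j} = insert i (insert j T)"
    using assms by (auto simp: T_def)
  then show ?thesis
    unfolding T_def[symmetric] using fin notin by (simp add: sum.distrib diag row)
qed

lemma path_length_bound:
  assumes "1 \<le> i" "i < j" "j \<le> m"
  shows "(real (j - i) - 1) * (\<Sum>k\<in>{i..<j}. D k (Suc k)) \<le> (\<Sum>t\<in>{Suc i..<j}. \<Sum>y\<in>{i..j}. D t y)"
proof -
  define E where "E = {i..<j}"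
  define e where "e k l = D k l + D (Suc k) (Suc l) - D k (Suc k) - D l (Suc l)" for k l
  have "(\<Sum>k\<in>E. e k k) \<le> (\<Sum>k\<in>E. \<Sum>l\<in>E. e k l)"
  proof (rule sum_mono)
    fix k assume k: "k \<in> E"
    have "0 \<le> e k l" if "l \<in> E - {k}" for l
      using adjacent_pairs_le_cross[of k l] k that assms by (simp add: E_def e_def)
    then have "0 \<le> (\<Sum>l\<in>E - {k}. e k l)" by (rule sum_nonneg)
    then show "e k k \<le> (\<Sum>l\<in>E. e k l)"
      using k by (simp add: sum.remove E_def)
  qed
  moreover have "(\<Sum>k\<in>E. e k k) = - 2 * (\<Sum>k\<in>E. D k (Suc k))"
    by (simp add: e_def diag sum_distrib_left)
  moreover have "(\<Sum>k\<in>E. \<Sum>l\<in>E. e k l) = (\<Sum>k\<in>E. \<Sum>l\<in>E. D k l) + (\<Sum>k\<in>E. \<Sum>l\<in>E. D (Suc k) (Suc l))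
      - 2 * real (j - i) * (\<Sum>k\<in>E. D k (Suc k))"
    using assms by (simp add: e_def E_def sum_subtractf sum.distrib sum_distrib_left[symmetric] of_nat_diff)
  moreover have "(\<Sum>k\<in>E. \<Sum>l\<in>E. D (Suc k) (Suc l)) = (\<Sum>k\<in>{Suc i..<Suc j}. \<Sum>l\<in>{Suc i..<Suc j}. D k l)"
    by (simp only: E_def sum.shift_bounds_Suc_ivl)
  moreover note interval_square_sums[OF \<open>i < j\<close>]
  ultimately show ?thesis by (simp add: E_def algebra_simps)
qed

lemma path_le_fan:
  assumes "1 \<le> i" "i + 2 \<le> j" "j \<le> m"
  shows "(\<Sum>k\<in>{i..<j}. D k (Suc k)) + (real (j - i) - 2) * D i j \<le> (\<Sum>t\<in>{Suc i..<j}. D i t + D t j)"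
proof -
  obtain j' where j: "j = Suc j'" and ij': "Suc i \<le> j'" using assms by (cases j) auto
  define K where "K = {Suc i..<j'}"
  have "(\<Sum>k\<in>K. D i j + D k (Suc k)) \<le> (\<Sum>k\<in>K. D i (Suc k) + D k j)"
    using four_point(2) assms j by (intro sum_mono) (simp add: K_def)
  moreover have "real (card K) = real (j - i) - 2"
    using ij' j by (simp add: K_def of_nat_diff)
  moreover have "(\<Sum>k\<in>{i..<j}. D k (Suc k)) = D i (Suc i) + (\<Sum>k\<in>K. D k (Suc k)) + D j' j"
    using ij' j by (simp add: K_def sum.atLeast_Suc_lessThan sum.atLeastLessThan_Suc)
  moreover have "(\<Sum>t\<in>{Suc i..<j}. D i t) = D i (Suc i) + (\<Sum>k\<in>K. D i (Suc k))"
    using ij' unfolding j K_def by (subst sum.atLeast_Suc_lessThan) (simp_all only: sum.shift_bounds_Suc_ivl)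
  moreover have "(\<Sum>t\<in>{Suc i..<j}. D t j) = (\<Sum>k\<in>K. D k j) + D j' j"
    using ij' j by (simp add: K_def sum.atLeastLessThan_Suc)
  ultimately show ?thesis by (simp add: sum.distrib)
qed

lemma kalmanson_outside_point:
  assumes "1 \<le> y" "y \<le> m" "y < i \<or> j < y" "i < t" "t < j" "1 \<le> i" "j \<le> m"
  shows "D i t + D t j - 2 * D i j \<le> 2 * D t y - D i y - D j y"
  using assms four_point[of i t j y] four_point[of y i t j] sym[of y] by auto

lemma row_sum_interior_bound:
  assumes "1 \<le> i" "i < t" "t < j" "j \<le> m"
  shows "(\<Sum>y\<in>{i..j}. 2 * D t y - D i y - D j y) + (real m - real (j - i) - 1) * (D i t + D t j - 2 * D i j)
     \<le> 2 * row_sum m D t - row_sum m D i - row_sum m D j"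
proof -
  define f where "f y = 2 * D t y - D i y - D j y" for y
  have sub: "{i..j} \<subseteq> {1..m}" using assms by auto
  have "card ({1..m} - {i..j}) = m - (Suc j - i)"
    using card_Diff_subset[OF finite_atLeastAtMost sub] by simp
  then have "real (card ({1..m} - {i..j})) = real m - real (j - i) - 1"
    using assms by (simp add: of_nat_diff)
  moreover have "(\<Sum>y\<in>{1..m} - {i..j}. D i t + D t j - 2 * D i j) \<le> (\<Sum>y\<in>{1..m} - {i..j}. f y)"
    using kalmanson_outside_point assms by (intro sum_mono) (auto simp: f_def)
  moreover have "2 * row_sum m D t - row_sum m D i - row_sum m D j = (\<Sum>y\<in>{i..j}. f y) + (\<Sum>y\<in>{1..m} - {i..j}. f y)"
    using sum.subset_diff[OF sub, of f]
    by (simp add: f_def row_sum_def sum_subtractf sum_distrib_left)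
  ultimately show ?thesis by (simp add: f_def)
qed

lemma sum_Q_diff_adjacent_nonneg:
  assumes "1 \<le> i" "i + 2 \<le> j" "j \<le> m" "2 * (j - i) \<le> m"
  shows "0 \<le> (\<Sum>k\<in>{i..<j}. Q_matrix m D i j - Q_matrix m D k (Suc k))"
proof -
  define L where "L = real (j - i)"
  define T where "T = {Suc i..<j}"
  define S where "S = (\<Sum>k\<in>{i..<j}. D k (Suc k))"
  define A where "A = (\<Sum>t\<in>T. D i t)"
  define B where "B = (\<Sum>t\<in>T. D t j)"
  define W where "W = (\<Sum>t\<in>T. \<Sum>y\<in>{i..j}. D t y)"
  have fin: "finite T" and notin: "i \<notin> T" "j \<notin> T" "i \<noteq> j" and card: "real (card T) = L - 1"
    using assms by (auto simp: T_def L_def of_nat_diff)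
  have P: "{i..j} = insert i (insert j T)" using assms by (auto simp: T_def)
  define inner where "inner t = (\<Sum>y\<in>{i..j}. 2 * D t y - D i y - D j y)" for t
  define outer where "outer t = (real m - L - 1) * (D i t + D t j - 2 * D i j)" for t
  have "(L - 1) * S \<le> W"
    using path_length_bound assms by (simp add: L_def S_def W_def T_def)
  moreover have "0 \<le> (real m - 2 * L) * (A + B - S - (L - 2) * D i j)"
    using path_le_fan[OF assms(1-3)] assms
    by (intro mult_nonneg_nonneg) (simp_all add: L_def S_def A_def B_def T_def sum.distrib of_nat_diff)
  ultimately have "0 \<le> 2 * (W - (L - 1) * S) + (real m - 2 * L) * (A + B - S - (L - 2) * D i j)"
    by (intro add_nonneg_nonneg) simp_all
  also have "\<dots> = (real m - 2) * (L * D i j - S) + ((2 * W - (L - 1) * (2 * D i j + A + B))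
      + (real m - L - 1) * (A + B - 2 * (L - 1) * D i j))"
    by (simp add: algebra_simps)
  also have "2 * W - (L - 1) * (2 * D i j + A + B) = (\<Sum>t\<in>T. inner t)"
    unfolding inner_def P using fin notin
    by (simp add: W_def A_def B_def P sum_subtractf sum.distrib sum_distrib_left card diag
        sym[of j] sym[of _ i] algebra_simps)
  also have "(real m - L - 1) * (A + B - 2 * (L - 1) * D i j) = (\<Sum>t\<in>T. outer t)"
    by (simp add: outer_def A_def B_def sum_distrib_left[symmetric] sum.distrib sum_subtractf card)
  also have "(\<Sum>t\<in>T. inner t) + (\<Sum>t\<in>T. outer t)
      \<le> (\<Sum>t\<in>T. 2 * row_sum m D t - row_sum m D i - row_sum m D j)"
    unfolding sum.distrib[symmetric] using row_sum_interior_bound assms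
    by (intro sum_mono) (auto simp: T_def L_def inner_def outer_def)
  also have "(real m - 2) * (L * D i j - S) + \<dots> = (\<Sum>k\<in>{i..<j}. Q_matrix m D i j - Q_matrix m D k (Suc k))"
    using sum_Q_diff_adjacent[of i j m D] assms by (simp add: L_def S_def T_def)
  finally show ?thesis by simp
qed

lemma short_chord_Q_ge_adjacent:
  assumes "1 \<le> i" "i + 2 \<le> j" "j \<le> m" "2 * (j - i) \<le> m"
  shows "\<exists>k\<in>{i..<j}. Q_matrix m D k (Suc k) \<le> Q_matrix m D i j"
  using ex_nonneg_if_sum_nonneg[OF _ _ sum_Q_diff_adjacent_nonneg[OF assms]] assms by auto

lemma rotate: "kalmanson_matrix m (\<lambda>x y. D (cyc_succ m x) (cyc_succ m y))"
proof
  fix p q r s :: nat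
  assume "1 \<le> p" "p < q" "q < r" "r < s" "s \<le> m"
  moreover note four_point[of "Suc p" "Suc q" "Suc r" "Suc s"] four_point[of 1 "Suc p" "Suc q" "Suc r"]
  ultimately show "D (cyc_succ m p) (cyc_succ m q) + D (cyc_succ m r) (cyc_succ m s)
        \<le> D (cyc_succ m p) (cyc_succ m r) + D (cyc_succ m q) (cyc_succ m s)"
    and "D (cyc_succ m p) (cyc_succ m s) + D (cyc_succ m q) (cyc_succ m r)
        \<le> D (cyc_succ m p) (cyc_succ m r) + D (cyc_succ m q) (cyc_succ m s)"
    by (auto simp: cyc_succ_def sym[of "Suc 0"])
qed (simp_all add: sym diag)

lemma rotate_funpow: "kalmanson_matrix m (\<lambda>x y. D ((cyc_succ m ^^ c) x) ((cyc_succ m ^^ c) y))"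
proof (induction c)
  case 0
  then show ?case by (simp add: kalmanson_matrix_axioms)
next
  case (Suc c)
  show ?case
    using kalmanson_matrix.rotate[OF Suc.IH] by (simp only: funpow_Suc_right comp_def)
qed

lemma exists_adjacent_Q_le:
  assumes "1 \<le> i" "i < j" "j \<le> m"
  shows "\<exists>k\<in>{1..m}. Q_matrix m D k (cyc_succ m k) \<le> Q_matrix m D i j"
proof -
  consider "j = Suc i" | "i = 1" "j = m" | "i + 2 \<le> j" "2 * (j - i) \<le> m"
    | "i + 2 \<le> j" "m < 2 * (j - i)" "\<not> (i = 1 \<and> j = m)"
    using assms by linarith
  then show ?thesis
  proof cases
    case 1
    then show ?thesis using assms by (intro bexI[of _ i]) (auto simp: cyc_succ_def)
  next
    case 2
    then show ?thesis using assms Q_sym by (intro bexI[of _ m]) (auto simp: cyc_succ_def)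
  next
    case 3
    then obtain k where "k \<in> {i..<j}" "Q_matrix m D k (Suc k) \<le> Q_matrix m D i j"
      using short_chord_Q_ge_adjacent assms by blast
    then show ?thesis using assms by (intro bexI[of _ k]) (auto simp: cyc_succ_def)
  next
    case 4
    \<comment> \<open>Rotate the circular order so that j becomes 1: the chord then spans the complementary
      arc, of length at most m / 2.\<close>
    define \<sigma> where "\<sigma> = cyc_succ m ^^ (j - 1)"
    define j' where "j' = m - j + 1 + i"
    interpret rotated: kalmanson_matrix m "\<lambda>x y. D (\<sigma> x) (\<sigma> y)"
      unfolding \<sigma>_def by (rule rotate_funpow)
    have bij: "bij_betw \<sigma> {1..m} {1..m}"
      unfolding \<sigma>_def by (intro bij_betw_funpow bij_betw_cyc_succ)
    have "1 + 2 \<le> j'" "j' \<le> m" "2 * (j' - 1) \<le> m"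
      using assms 4 by (auto simp: j'_def)
    then obtain k where k: "k \<in> {1..<j'}"
      and le: "Q_matrix m (\<lambda>x y. D (\<sigma> x) (\<sigma> y)) k (Suc k) \<le> Q_matrix m (\<lambda>x y. D (\<sigma> x) (\<sigma> y)) 1 j'"
      using rotated.short_chord_Q_ge_adjacent[of 1 j'] by auto
    have "j' + (j - 1) - 1 = (i - 1) + m" "i - 1 < m" using assms by (auto simp: j'_def)
    then have "(j' + (j - 1) - 1) mod m = i - 1" by simp
    then have "\<sigma> 1 = j" "\<sigma> j' = i"
      using assms \<open>1 + 2 \<le> j'\<close> \<open>j' \<le> m\<close> by (simp_all add: \<sigma>_def cyc_succ_funpow)
    moreover have "\<sigma> (Suc k) = cyc_succ m (\<sigma> k)"
      using k \<open>j' \<le> m\<close> by (simp add: \<sigma>_def funpow_swap1 cyc_succ_def)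
    moreover have "\<sigma> k \<in> {1..m}" using bij_betw_apply[OF bij] k \<open>j' \<le> m\<close> by simp
    ultimately show ?thesis using le Q_sym by (auto simp: Q_matrix_reindex[OF bij])
  qed
qed

end

lemma sum_weighted_const:
  fixes w :: "'a \<Rightarrow> real"
  assumes "(\<Sum>x\<in>A. w x) = 1"
  shows "(\<Sum>x\<in>A. w x * c) = c"
  using assms by (simp add: sum_distrib_right[symmetric])

lemma interval_partition_mono:
  assumes "interval_partition n m a" "p \<le> q" "q \<le> m"
  shows "a p \<le> a q"
proof (rule lift_Suc_mono_le_ivl[where f = a and N = "{..<m}"])
  show "a k \<le> a (Suc k)" if "k \<in> {..<m}" for k
    using assms(1) that unfolding interval_partition_def by (simp add: less_imp_le)
qed (use assms in auto)

lemma block_subset: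
  assumes "circular_ordering n \<pi>" "interval_partition n m a" "r \<in> {1..m}"
  shows "block \<pi> a r \<subseteq> {1..n}"
proof -
  have "a r \<le> n" using interval_partition_mono[OF assms(2), of r m] assms by (simp add: interval_partition_def)
  then have "{a (r - 1)<..a r} \<subseteq> {1..n}" by auto
  then show ?thesis
    using assms(1) unfolding block_def circular_ordering_def bij_betw_def by blast
qed

lemma block_dist_nested:
  "block_dist \<delta> \<mu> \<pi> a r s = (\<Sum>x\<in>block \<pi> a r. \<mu> x * (\<Sum>y\<in>block \<pi> a s. \<mu> y * \<delta> x y))"
  by (simp add: block_dist_def sum_distrib_left mult.assoc)

lemma block_interval_order:
  assumes "interval_partition n m a" "u \<in> {a (t - 1)<..a t}" "v \<in> {a (t' - 1)<..a t'}" "t < t'" "t' \<le> m"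
  shows "u < v"
proof -
  have "a t \<le> a (t' - 1)" using interval_partition_mono[OF assms(1), of t "t' - 1"] assms by simp
  then show ?thesis using assms by simp
qed

lemma block_points_kalmanson:
  assumes ka: "kalmanson n \<delta> \<pi>" and ip: "interval_partition n m a"
    and "1 \<le> p" "p < q" "q < r" "r < s" "s \<le> m"
    and "x \<in> block \<pi> a p" "y \<in> block \<pi> a q" "w \<in> block \<pi> a r" "z \<in> block \<pi> a s"
  shows "\<delta> x y + \<delta> w z \<le> \<delta> x w + \<delta> y z \<and> \<delta> x z + \<delta> y w \<le> \<delta> x w + \<delta> y z"
proof -
  obtain x' y' w' z' where pre: "x = \<pi> x'" "y = \<pi> y'" "w = \<pi> w'" "z = \<pi> z'"
    and I: "x' \<in> {a (p - 1)<..a p}" "y' \<in> {a (q - 1)<..a q}" "w' \<in> {a (r - 1)<..a r}" "z' \<in> {a (s - 1)<..a s}"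
    using assms(8-11) unfolding block_def by blast
  have "x' < y'" "y' < w'" "w' < z'"
    using block_interval_order[OF ip I(1,2)] block_interval_order[OF ip I(2,3)]
      block_interval_order[OF ip I(3,4)] assms by simp_all
  moreover have "1 \<le> x'" "z' \<le> n"
    using I(1,4) interval_partition_mono[OF ip, of s m] assms by (auto simp: interval_partition_def)
  ultimately show ?thesis
    using ka unfolding kalmanson_def pre by blast
qed

lemma block_kalmanson:
  assumes co: "circular_ordering n \<pi>" and ka: "kalmanson n \<delta> \<pi>"
    and ip: "interval_partition n m a" and bw: "block_weighting n m \<pi> a \<mu>"
    and "1 \<le> p" "p < q" "q < r" "r < s" "s \<le> m"
  shows "block_dist \<delta> \<mu> \<pi> a p q + block_dist \<delta> \<mu> \<pi> a r s
      \<le> block_dist \<delta> \<mu> \<pi> a p r + block_dist \<delta> \<mu> \<pi> a q s"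
    and "block_dist \<delta> \<mu> \<pi> a p s + block_dist \<delta> \<mu> \<pi> a q r
      \<le> block_dist \<delta> \<mu> \<pi> a p r + block_dist \<delta> \<mu> \<pi> a q s"
proof -
  let ?C = "block \<pi> a"
  define E where "E f = (\<Sum>x\<in>?C p. \<mu> x * (\<Sum>y\<in>?C q. \<mu> y * (\<Sum>w\<in>?C r. \<mu> w * (\<Sum>z\<in>?C s. \<mu> z * f x y w z))))"
    for f :: "nat \<Rightarrow> nat \<Rightarrow> nat \<Rightarrow> nat \<Rightarrow> real"
  have ranges: "p \<in> {1..m}" "q \<in> {1..m}" "r \<in> {1..m}" "s \<in> {1..m}" using assms by auto
  have weights: "(\<Sum>x\<in>?C p. \<mu> x) = 1" "(\<Sum>x\<in>?C q. \<mu> x) = 1" "(\<Sum>x\<in>?C r. \<mu> x) = 1" "(\<Sum>x\<in>?C s. \<mu> x) = 1"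
    using bw ranges by (simp_all add: block_weighting_def)
  have nonneg: "0 \<le> \<mu> x" if "x \<in> ?C t" "t \<in> {1..m}" for x t
    using bw block_subset[OF co ip that(2)] that(1) by (auto simp: block_weighting_def)
  have E_nonneg: "0 \<le> E f" if "\<And>x y w z. x \<in> ?C p \<Longrightarrow> y \<in> ?C q \<Longrightarrow> w \<in> ?C r \<Longrightarrow> z \<in> ?C s \<Longrightarrow> 0 \<le> f x y w z" for f
    unfolding E_def using that nonneg ranges by (intro sum_nonneg mult_nonneg_nonneg) auto
  have expand: "E (\<lambda>x y w z. f1 x y w z + f2 x y w z - f3 x y w z - f4 x y w z) = E f1 + E f2 - E f3 - E f4" for f1 f2 f3 f4
    unfolding E_def by (simp add: distrib_left right_diff_distrib sum.distrib sum_subtractf)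
  have "E (\<lambda>x y w z. \<delta> x y) = block_dist \<delta> \<mu> \<pi> a p q" "E (\<lambda>x y w z. \<delta> w z) = block_dist \<delta> \<mu> \<pi> a r s"
    "E (\<lambda>x y w z. \<delta> x w) = block_dist \<delta> \<mu> \<pi> a p r" "E (\<lambda>x y w z. \<delta> y z) = block_dist \<delta> \<mu> \<pi> a q s"
    "E (\<lambda>x y w z. \<delta> x z) = block_dist \<delta> \<mu> \<pi> a p s" "E (\<lambda>x y w z. \<delta> y w) = block_dist \<delta> \<mu> \<pi> a q r"
    unfolding E_def block_dist_nested by (simp_all add: sum_weighted_const weights)
  moreover have "0 \<le> E (\<lambda>x y w z. \<delta> x w + \<delta> y z - \<delta> x y - \<delta> w z)"
    and "0 \<le> E (\<lambda>x y w z. \<delta> x w + \<delta> y z - \<delta> x z - \<delta> y w)"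
    using block_points_kalmanson[OF ka ip assms(5-9)] by (intro E_nonneg; fastforce)+
  ultimately show "block_dist \<delta> \<mu> \<pi> a p q + block_dist \<delta> \<mu> \<pi> a r s
      \<le> block_dist \<delta> \<mu> \<pi> a p r + block_dist \<delta> \<mu> \<pi> a q s"
    and "block_dist \<delta> \<mu> \<pi> a p s + block_dist \<delta> \<mu> \<pi> a q r
      \<le> block_dist \<delta> \<mu> \<pi> a p r + block_dist \<delta> \<mu> \<pi> a q s"
    unfolding expand by linarith+
qed

lemma block_dist_sym:
  assumes "dissimilarity n \<delta>" "circular_ordering n \<pi>" "interval_partition n m a" "r \<in> {1..m}" "s \<in> {1..m}"
  shows "block_dist \<delta> \<mu> \<pi> a r s = block_dist \<delta> \<mu> \<pi> a s r"
proof -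
  have "\<delta> x y = \<delta> y x" if "x \<in> block \<pi> a r" "y \<in> block \<pi> a s" for x y
    using assms(1) block_subset[OF assms(2,3,4)] block_subset[OF assms(2,3,5)] that
    by (auto simp: dissimilarity_def)
  then show ?thesis
    unfolding block_dist_def by (subst sum.swap) (simp add: mult.commute)
qed

(* The entries on the diagonal and outside {1..m} are set to 0, so that the matrix is symmetric
   with zero diagonal everywhere; Qd never uses them. *)
definition block_matrix ::
  "nat \<Rightarrow> (nat \<Rightarrow> nat \<Rightarrow> real) \<Rightarrow> (nat \<Rightarrow> real) \<Rightarrow> (nat \<Rightarrow> nat) \<Rightarrow> (nat \<Rightarrow> nat) \<Rightarrow> nat \<Rightarrow> nat \<Rightarrow> real" where
  "block_matrix m \<delta> \<mu> \<pi> a r s =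
     (if r \<noteq> s \<and> r \<in> {1..m} \<and> s \<in> {1..m} then block_dist \<delta> \<mu> \<pi> a r s else 0)"

lemma kalmanson_matrix_block_matrix:
  assumes "dissimilarity n \<delta>" "circular_ordering n \<pi>" "kalmanson n \<delta> \<pi>"
    "interval_partition n m a" "block_weighting n m \<pi> a \<mu>"
  shows "kalmanson_matrix m (block_matrix m \<delta> \<mu> \<pi> a)"
proof
  fix p q r s :: nat
  assume "1 \<le> p" "p < q" "q < r" "r < s" "s \<le> m"
  with block_kalmanson[OF assms(2-5)]
  show "block_matrix m \<delta> \<mu> \<pi> a p q + block_matrix m \<delta> \<mu> \<pi> a r s
      \<le> block_matrix m \<delta> \<mu> \<pi> a p r + block_matrix m \<delta> \<mu> \<pi> a q s"
    and "block_matrix m \<delta> \<mu> \<pi> a p s + block_matrix m \<delta> \<mu> \<pi> a q r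
      \<le> block_matrix m \<delta> \<mu> \<pi> a p r + block_matrix m \<delta> \<mu> \<pi> a q s"
    by (simp_all add: block_matrix_def)
qed (use block_dist_sym[OF assms(1,2,4)] in \<open>auto simp: block_matrix_def\<close>)

lemma Qd_eq_Q_matrix:
  assumes "x \<in> {1..m}" "y \<in> {1..m}" "x \<noteq> y"
  shows "Qd \<delta> \<mu> \<pi> a m x y = Q_matrix m (block_matrix m \<delta> \<mu> \<pi> a) x y"
proof -
  have "row_sum m (block_matrix m \<delta> \<mu> \<pi> a) z = (\<Sum>t\<in>{1..m} - {z}. block_dist \<delta> \<mu> \<pi> a z t)"
    if "z \<in> {1..m}" for z
    using that by (simp add: row_sum_def sum.remove block_matrix_def)
  then show ?thesis
    using assms by (simp add: Qd_def Q_matrix_def block_matrix_def)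
qed

theorem mainTheorem10:
  fixes n m :: nat and \<delta> :: "nat \<Rightarrow> nat \<Rightarrow> real" and \<pi> a :: "nat \<Rightarrow> nat"
    and \<mu> :: "nat \<Rightarrow> real" and i j :: nat
  assumes "dissimilarity n \<delta>"
    and "circular_ordering n \<pi>"
    and "kalmanson n \<delta> \<pi>"
    and "interval_partition n m a"
    and "block_weighting n m \<pi> a \<mu>"
    and "1 \<le> i" and "i < j" and "j \<le> m" and "i + 3 < j"
  shows "\<exists>k\<in>{1..m}. Qd \<delta> \<mu> \<pi> a m i j - Qd \<delta> \<mu> \<pi> a m k (cyc_succ m k) \<ge> 0"
proof -
  interpret kalmanson_matrix m "block_matrix m \<delta> \<mu> \<pi> a"
    using kalmanson_matrix_block_matrix assms(1-5) .
  obtain k where k: "k \<in> {1..m}"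
    and le: "Q_matrix m (block_matrix m \<delta> \<mu> \<pi> a) k (cyc_succ m k) \<le> Q_matrix m (block_matrix m \<delta> \<mu> \<pi> a) i j"
    using exists_adjacent_Q_le assms(6-8) by blast
  have "cyc_succ m k \<in> {1..m}" "cyc_succ m k \<noteq> k"
    using k assms(6-8) by (auto simp: cyc_succ_def)
  then show ?thesis
    using k le assms(6-8) by (intro bexI[of _ k]) (simp_all add: Qd_eq_Q_matrix)
qed

end
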